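(* Let $A$ and $B$ be differential rings and $\nu\colon A\to B$ a differential homomorphism. Suppose $B$ is differentially generated over $\nu(A)$ by a single element $\eta\in B$, and that there exist $b_1,\ldots,b_n\in A$ such that $\nu(b_k)\eta\in\nu(A)$ for all $k$ and $\{b_1,\ldots,b_n\}=A$. Then the contraction map $\nu^*\colon \operatorname{Spec}^\Delta B\to V(\ker\nu)$, $\mathfrak q\mapsto\nu^{-1}(\mathfrak q)$, is a homeomorphism, where $V(\ker\nu)\subseteq\operatorname{Spec}^\Delta A$ carries the subspace topology.
   Context: All rings are commutative with unit; homomorphisms preserve the unit. A differential ring is a ring equipped with finitely many pairwise commuting derivations; a differential homomorphism is a ring homomorphism commuting with the derivations. $B$ is differentially generated over $\nu(A)$ by $\eta$ if $B$ is the smallest differential subring of $B$ containing $\nu(A)$ and $\eta$ (i.e. $B$ is generated as a ring over $\nu(A)$ by all derivatives of $\eta$ of all orders). For a differential ring $A$, $\operatorname{Spec}^\Delta A$ is the set of prime ideals of $A$ closed under all the derivations (prime differential ideals); for $E\subseteq A$, $V(E)$ is the set of prime differential ideals containing $E$, and the sets $V(E)$ are the closed sets of the Kolchin topology on $\operatorname{Spec}^\Delta A$. For $E\subseteq A$, $\{E\}$ denotes the smallest radical differential ideal of $A$ containing $E$. *)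

theory Defs
  imports "HOL-Analysis.Analysis"
begin

definition is_derivation :: "('a::comm_ring_1 \<Rightarrow> 'a) \<Rightarrow> bool" where
  "is_derivation D \<longleftrightarrow> (\<forall>x y. D (x + y) = D x + D y) \<and> (\<forall>x y. D (x * y) = x * D y + y * D x)"

definition diff_ring :: "nat \<Rightarrow> (nat \<Rightarrow> 'a::comm_ring_1 \<Rightarrow> 'a) \<Rightarrow> bool" where
  "diff_ring m d \<longleftrightarrow> (\<forall>i<m. is_derivation (d i)) \<and>
     (\<forall>i<m. \<forall>j<m. \<forall>x. d i (d j x) = d j (d i x))"

definition diff_hom :: "nat \<Rightarrow> (nat \<Rightarrow> 'a::comm_ring_1 \<Rightarrow> 'a) \<Rightarrow> (nat \<Rightarrow> 'b::comm_ring_1 \<Rightarrow> 'b)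
    \<Rightarrow> ('a \<Rightarrow> 'b) \<Rightarrow> bool" where
  "diff_hom m dA dB \<nu> \<longleftrightarrow> (\<forall>x y. \<nu> (x + y) = \<nu> x + \<nu> y) \<and> (\<forall>x y. \<nu> (x * y) = \<nu> x * \<nu> y)
     \<and> \<nu> 1 = 1 \<and> (\<forall>i<m. \<forall>x. \<nu> (dA i x) = dB i (\<nu> x))"

definition diff_subring :: "nat \<Rightarrow> (nat \<Rightarrow> 'a::comm_ring_1 \<Rightarrow> 'a) \<Rightarrow> 'a set \<Rightarrow> bool" where
  "diff_subring m d S \<longleftrightarrow> 1 \<in> S \<and> (\<forall>x\<in>S. \<forall>y\<in>S. x + y \<in> S \<and> x * y \<in> S \<and> - x \<in> S)
     \<and> (\<forall>i<m. \<forall>x\<in>S. d i x \<in> S)"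

definition diff_generated :: "nat \<Rightarrow> (nat \<Rightarrow> 'b::comm_ring_1 \<Rightarrow> 'b) \<Rightarrow> ('a \<Rightarrow> 'b) \<Rightarrow> 'b \<Rightarrow> bool" where
  "diff_generated m dB \<nu> \<eta> \<longleftrightarrow>
     \<Inter>{S. diff_subring m dB S \<and> range \<nu> \<subseteq> S \<and> \<eta> \<in> S} = UNIV"

definition is_ideal :: "'a::comm_ring_1 set \<Rightarrow> bool" where
  "is_ideal I \<longleftrightarrow> 0 \<in> I \<and> (\<forall>x\<in>I. \<forall>y\<in>I. x + y \<in> I) \<and> (\<forall>x\<in>I. \<forall>r. r * x \<in> I)"

definition diff_ideal :: "nat \<Rightarrow> (nat \<Rightarrow> 'a::comm_ring_1 \<Rightarrow> 'a) \<Rightarrow> 'a set \<Rightarrow> bool" where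
  "diff_ideal m d I \<longleftrightarrow> is_ideal I \<and> (\<forall>i<m. \<forall>x\<in>I. d i x \<in> I)"

definition is_prime_ideal :: "'a::comm_ring_1 set \<Rightarrow> bool" where
  "is_prime_ideal P \<longleftrightarrow> is_ideal P \<and> 1 \<notin> P \<and> (\<forall>x y. x * y \<in> P \<longrightarrow> x \<in> P \<or> y \<in> P)"

definition is_radical :: "'a::comm_ring_1 set \<Rightarrow> bool" where
  "is_radical I \<longleftrightarrow> (\<forall>x n. x ^ n \<in> I \<longrightarrow> x \<in> I)"

text \<open>The radical differential ideal generated by E, written {E} in the paper.\<close>
definition rad_diff_ideal_gen :: "nat \<Rightarrow> (nat \<Rightarrow> 'a::comm_ring_1 \<Rightarrow> 'a) \<Rightarrow> 'a set \<Rightarrow> 'a set" where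
  "rad_diff_ideal_gen m d E = \<Inter>{I. diff_ideal m d I \<and> is_radical I \<and> E \<subseteq> I}"

definition diff_spec :: "nat \<Rightarrow> (nat \<Rightarrow> 'a::comm_ring_1 \<Rightarrow> 'a) \<Rightarrow> 'a set set" where
  "diff_spec m d = {P. is_prime_ideal P \<and> diff_ideal m d P}"

definition diff_V :: "nat \<Rightarrow> (nat \<Rightarrow> 'a::comm_ring_1 \<Rightarrow> 'a) \<Rightarrow> 'a set \<Rightarrow> 'a set set" where
  "diff_V m d E = {P \<in> diff_spec m d. E \<subseteq> P}"

definition kolchin_topology :: "nat \<Rightarrow> (nat \<Rightarrow> 'a::comm_ring_1 \<Rightarrow> 'a) \<Rightarrow> 'a set topology" where
  "kolchin_topology m d = topology (\<lambda>U. \<exists>E. U = diff_spec m d - diff_V m d E)"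

end

theory Submission
  imports Defs
begin

(* For c in A let fractions c be the set of y in B with nu c ^ N * y in nu(A) for some N,
   i.e. the part of B inside the localisation of nu(A) at nu c. By the quotient rule for
   derivations it is a differential subring containing nu(A); so if B is differentially
   generated by eta and nu c * eta lies in nu(A), it is all of B. For such c and a prime
   differential ideal P of A with ker nu in P and c outside P, the extension
   ext_ideal c P = {y. nu c ^ N * y in nu(P)} is a prime differential ideal of B contracting
   to P, and it is the only one. If every prime differential ideal of A avoids such a c
   (here one of the b_k, because {b_1,...,b_n} = A), contraction is therefore a bijection
   Spec^Delta B -> V(ker nu); it is continuous and closed, hence a homeomorphism. *)

lemma ideal_zero: "is_ideal I \<Longrightarrow> 0 \<in> I"
  by (simp add: is_ideal_def)

lemma ideal_add: "is_ideal I \<Longrightarrow> x \<in> I \<Longrightarrow> y \<in> I \<Longrightarrow> x + y \<in> I"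
  by (simp add: is_ideal_def)

lemma ideal_mult_left: "is_ideal I \<Longrightarrow> x \<in> I \<Longrightarrow> r * x \<in> I"
  by (simp add: is_ideal_def)

lemma ideal_mult_right: "is_ideal I \<Longrightarrow> x \<in> I \<Longrightarrow> x * r \<in> I"
  using ideal_mult_left[of I x r] by (simp add: mult.commute)

lemma ideal_diff:
  assumes "is_ideal I" "x \<in> I" "y \<in> I" shows "x - y \<in> I"
  using ideal_add[OF assms(1,2) ideal_mult_left[OF assms(1,3), of "-1"]] by simp

lemma prime_pow_cancel:
  assumes "is_prime_ideal P" "b \<notin> P" "b ^ N * x \<in> P" shows "x \<in> P"
  using assms(3)
proof (induction N)
  case (Suc N)
  then have "b * (b ^ N * x) \<in> P" by (simp add: mult.assoc)
  then show ?case using assms(1,2) Suc.IH unfolding is_prime_ideal_def by blast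
qed simp

lemma prime_imp_radical: "is_prime_ideal P \<Longrightarrow> is_radical P"
  unfolding is_radical_def using prime_pow_cancel[of P _ _ 1] by (auto simp: is_prime_ideal_def)

lemma diff_spec_avoids_generators:
  assumes "rad_diff_ideal_gen m d E = UNIV" and "P \<in> diff_spec m d"
  shows "\<not> E \<subseteq> P"
proof
  assume "E \<subseteq> P"
  moreover have "is_prime_ideal P" "diff_ideal m d P" using assms(2) by (auto simp: diff_spec_def)
  ultimately have "UNIV \<subseteq> P"
    using assms(1) prime_imp_radical unfolding rad_diff_ideal_gen_def by blast
  then show False using \<open>is_prime_ideal P\<close> by (auto simp: is_prime_ideal_def)
qed

lemma diff_V_products:
  "diff_V m d {x * y |x y. x \<in> E1 \<and> y \<in> E2} = diff_V m d E1 \<union> diff_V m d E2"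
proof (intro set_eqI iffI)
  fix P assume P: "P \<in> diff_V m d {x * y |x y. x \<in> E1 \<and> y \<in> E2}"
  then have prime: "is_prime_ideal P" by (simp add: diff_V_def diff_spec_def)
  show "P \<in> diff_V m d E1 \<union> diff_V m d E2"
  proof (rule ccontr)
    assume "P \<notin> diff_V m d E1 \<union> diff_V m d E2"
    then obtain x y where "x \<in> E1" "x \<notin> P" "y \<in> E2" "y \<notin> P" using P by (auto simp: diff_V_def)
    moreover from calculation have "x * y \<in> P" using P by (auto simp: diff_V_def)
    ultimately show False using prime by (auto simp: is_prime_ideal_def)
  qed
next
  fix P assume "P \<in> diff_V m d E1 \<union> diff_V m d E2"
  then have P: "P \<in> diff_spec m d" "E1 \<subseteq> P \<or> E2 \<subseteq> P" by (auto simp: diff_V_def)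
  then have "is_ideal P" by (simp add: diff_spec_def is_prime_ideal_def)
  then have "{x * y |x y. x \<in> E1 \<and> y \<in> E2} \<subseteq> P"
    using P(2) ideal_mult_left ideal_mult_right by blast
  then show "P \<in> diff_V m d {x * y |x y. x \<in> E1 \<and> y \<in> E2}"
    using P(1) by (simp add: diff_V_def)
qed

lemma diff_V_Union: "diff_spec m d - diff_V m d (\<Union>F) = (\<Union>E\<in>F. diff_spec m d - diff_V m d E)"
  by (auto simp: diff_V_def)

lemma kolchin_istopology: "istopology (\<lambda>U. \<exists>E. U = diff_spec m d - diff_V m d E)"
  unfolding istopology_def
proof (intro conjI allI impI)
  fix S T assume "\<exists>E. S = diff_spec m d - diff_V m d E" "\<exists>E. T = diff_spec m d - diff_V m d E"
  then obtain E1 E2 where "S = diff_spec m d - diff_V m d E1" "T = diff_spec m d - diff_V m d E2"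
    by blast
  then have "S \<inter> T = diff_spec m d - diff_V m d {x * y |x y. x \<in> E1 \<and> y \<in> E2}"
    by (auto simp: diff_V_products)
  then show "\<exists>E. S \<inter> T = diff_spec m d - diff_V m d E" by blast
next
  fix K assume K: "\<forall>S\<in>K. \<exists>E. S = diff_spec m d - diff_V m d E"
  let ?F = "{E. diff_spec m d - diff_V m d E \<in> K}"
  have "\<Union>K \<subseteq> (\<Union>E\<in>?F. diff_spec m d - diff_V m d E)"
  proof
    fix P assume "P \<in> \<Union>K"
    then obtain S where S: "S \<in> K" "P \<in> S" by blast
    with K obtain E where "S = diff_spec m d - diff_V m d E" by blast
    with S show "P \<in> (\<Union>E\<in>?F. diff_spec m d - diff_V m d E)" by blast
  qed
  then have "\<Union>K = diff_spec m d - diff_V m d (\<Union>?F)"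
    unfolding diff_V_Union by blast
  then show "\<exists>E. \<Union>K = diff_spec m d - diff_V m d E" by blast
qed

lemma openin_kolchin:
  "openin (kolchin_topology m d) U \<longleftrightarrow> (\<exists>E. U = diff_spec m d - diff_V m d E)"
  unfolding kolchin_topology_def using kolchin_istopology[of m d] by simp

lemma topspace_kolchin: "topspace (kolchin_topology m d) = diff_spec m d"
proof -
  have "diff_spec m d = diff_spec m d - diff_V m d {1}"
    by (auto simp: diff_V_def diff_spec_def is_prime_ideal_def)
  then have "openin (kolchin_topology m d) (diff_spec m d)" unfolding openin_kolchin by blast
  then show ?thesis using openin_subset unfolding topspace_def openin_kolchin by blast
qed

lemma diff_V_subset_spec: "diff_V m d E \<subseteq> diff_spec m d"
  by (auto simp: diff_V_def)

lemma closedin_kolchin: "closedin (kolchin_topology m d) S \<longleftrightarrow> (\<exists>E. S = diff_V m d E)"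
proof
  assume "closedin (kolchin_topology m d) S"
  then obtain E where "S \<subseteq> diff_spec m d" "diff_spec m d - S = diff_spec m d - diff_V m d E"
    unfolding closedin_def topspace_kolchin openin_kolchin by blast
  then have "S = diff_V m d E" using diff_V_subset_spec[of m d E] by blast
  then show "\<exists>E. S = diff_V m d E" ..
next
  assume "\<exists>E. S = diff_V m d E"
  then show "closedin (kolchin_topology m d) S"
    unfolding closedin_def topspace_kolchin openin_kolchin using diff_V_subset_spec by blast
qed

(* Derivations kill 1 and satisfy the power rule, in the multiplied-through form
   D (u ^ N) * u = N * u ^ N * D u that avoids dividing by u. *)

lemma derivation_one: "is_derivation D \<Longrightarrow> D 1 = 0"
proof -
  assume "is_derivation D"
  then have "D (1 * 1) = 1 * D 1 + 1 * D 1" unfolding is_derivation_def by blast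
  then show ?thesis by simp
qed

lemma derivation_power: "is_derivation D \<Longrightarrow> D (u ^ N) * u = of_nat N * u ^ N * D u"
proof (induction N)
  case 0
  then show ?case using derivation_one[OF 0] by simp
next
  case (Suc N)
  have "D (u ^ Suc N) = u * D (u ^ N) + u ^ N * D u"
    using Suc.prems unfolding is_derivation_def by simp
  then have "D (u ^ Suc N) * u = u * (D (u ^ N) * u) + u ^ Suc N * D u"
    by (simp add: algebra_simps)
  also have "\<dots> = of_nat (Suc N) * u ^ Suc N * D u"
    using Suc by (simp add: algebra_simps)
  finally show ?case .
qed

locale diff_ring_hom =
  fixes m :: nat and dA :: "nat \<Rightarrow> 'a::comm_ring_1 \<Rightarrow> 'a" and dB :: "nat \<Rightarrow> 'b::comm_ring_1 \<Rightarrow> 'b"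
    and \<nu> :: "'a \<Rightarrow> 'b"
  assumes diff_ring_B: "diff_ring m dB" and hom: "diff_hom m dA dB \<nu>"
begin

lemma nu_add [simp]: "\<nu> (x + y) = \<nu> x + \<nu> y"
  using hom by (simp add: diff_hom_def)

lemma nu_mult [simp]: "\<nu> (x * y) = \<nu> x * \<nu> y"
  using hom by (simp add: diff_hom_def)

lemma nu_one [simp]: "\<nu> 1 = 1"
  using hom by (simp add: diff_hom_def)

lemma nu_deriv: "i < m \<Longrightarrow> \<nu> (dA i x) = dB i (\<nu> x)"
  using hom by (simp add: diff_hom_def)

lemma nu_zero [simp]: "\<nu> 0 = 0"
  using nu_add[of 0 0] by simp

lemma nu_uminus [simp]: "\<nu> (- x) = - \<nu> x"
  using minus_unique[of "\<nu> x" "\<nu> (- x)"] nu_add[of x "- x"] by simp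

lemma nu_diff [simp]: "\<nu> (x - y) = \<nu> x - \<nu> y"
  using nu_add[of x "- y"] by simp

lemma nu_power [simp]: "\<nu> (x ^ N) = \<nu> x ^ N"
  by (induction N) auto

lemma nu_of_nat [simp]: "\<nu> (of_nat N) = of_nat N"
  by (induction N) auto

lemma contraction_in_diff_V:
  assumes q: "q \<in> diff_spec m dB" shows "\<nu> -` q \<in> diff_V m dA (\<nu> -` {0})"
proof -
  have prime: "is_prime_ideal q" and diff: "diff_ideal m dB q" using q by (auto simp: diff_spec_def)
  then have ideal: "is_ideal q" by (simp add: is_prime_ideal_def)
  have "is_ideal (\<nu> -` q)"
    unfolding is_ideal_def using ideal ideal_zero ideal_add ideal_mult_left by auto
  moreover have "\<forall>i<m. \<forall>x\<in>\<nu> -` q. dA i x \<in> \<nu> -` q"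
    using diff by (simp add: diff_ideal_def nu_deriv)
  moreover have "\<nu> -` {0} \<subseteq> \<nu> -` q" using ideal_zero[OF ideal] by auto
  ultimately show ?thesis
    using prime by (simp add: diff_V_def diff_spec_def diff_ideal_def is_prime_ideal_def)
qed

(* Quotient rule: if nu c ^ N * y = nu a then y = nu a / nu c ^ N and
   D y = (nu c * D (nu a) - N * nu a * D (nu c)) / nu c ^ (N + 1). *)
lemma quotient_rule:
  assumes i: "i < m" and y: "\<nu> c ^ N * y = \<nu> a"
  shows "\<nu> c ^ Suc N * dB i y = \<nu> (c * dA i a - of_nat N * dA i c * a)"
proof -
  let ?u = "\<nu> c"
  have D: "is_derivation (dB i)" using diff_ring_B i by (simp add: diff_ring_def)
  have "?u * dB i (\<nu> a) = ?u * dB i (?u ^ N * y)" by (simp only: y)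
  also have "\<dots> = ?u ^ Suc N * dB i y + y * (dB i (?u ^ N) * ?u)"
    using D unfolding is_derivation_def by (simp add: algebra_simps)
  also have "\<dots> = ?u ^ Suc N * dB i y + of_nat N * (?u ^ N * y) * dB i ?u"
    unfolding derivation_power[OF D] by (simp add: algebra_simps)
  also have "\<dots> = ?u ^ Suc N * dB i y + of_nat N * \<nu> a * dB i ?u"
    by (simp only: y)
  finally show ?thesis by (simp add: nu_deriv[OF i] algebra_simps)
qed

(* Elements of B that become images of A after multiplication by a power of nu c, i.e. the
   part of B lying in the localisation of nu(A) at nu c. *)
definition fractions :: "'a \<Rightarrow> 'b set" where
  "fractions c = {y. \<exists>N a. \<nu> c ^ N * y = \<nu> a}"

lemma fraction_add:
  assumes "\<nu> c ^ N * x = \<nu> a" and "\<nu> c ^ M * y = \<nu> e"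
  shows "\<nu> c ^ (N + M) * (x + y) = \<nu> (c ^ M * a + c ^ N * e)"
proof -
  have "\<nu> c ^ (N + M) * (x + y) = \<nu> c ^ M * (\<nu> c ^ N * x) + \<nu> c ^ N * (\<nu> c ^ M * y)"
    by (simp add: power_add algebra_simps)
  then show ?thesis using assms by simp
qed

lemma fraction_mult:
  assumes "\<nu> c ^ N * x = \<nu> a" and "\<nu> c ^ M * y = \<nu> e"
  shows "\<nu> c ^ (N + M) * (x * y) = \<nu> (a * e)"
proof -
  have "\<nu> c ^ (N + M) * (x * y) = (\<nu> c ^ N * x) * (\<nu> c ^ M * y)"
    by (simp add: power_add algebra_simps)
  then show ?thesis using assms by simp
qed

lemma range_subset_fractions: "range \<nu> \<subseteq> fractions c"
proof
  fix y assume "y \<in> range \<nu>"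
  then obtain a where "\<nu> c ^ 0 * y = \<nu> a" by auto
  then show "y \<in> fractions c" unfolding fractions_def by blast
qed

(* By the quotient rule, the fractions with denominator a power of nu c form a
   differential subring of B. *)
lemma fractions_diff_subring: "diff_subring m dB (fractions c)"
  unfolding diff_subring_def
proof (intro conjI ballI allI impI)
  show "1 \<in> fractions c" using range_subset_fractions[of c] nu_one by (metis rangeI subsetD)
next
  fix x y assume "x \<in> fractions c" "y \<in> fractions c"
  then obtain N a M e where x: "\<nu> c ^ N * x = \<nu> a" and y: "\<nu> c ^ M * y = \<nu> e"
    unfolding fractions_def by blast
  show "x + y \<in> fractions c" using fraction_add[OF x y] unfolding fractions_def by blast
  show "x * y \<in> fractions c" using fraction_mult[OF x y] unfolding fractions_def by blast
  have "\<nu> c ^ N * (- x) = \<nu> (- a)" using x by simp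
  then show "- x \<in> fractions c" unfolding fractions_def by blast
next
  fix i x assume "i < m" "x \<in> fractions c"
  then obtain N a where "\<nu> c ^ N * x = \<nu> a" unfolding fractions_def by blast
  from quotient_rule[OF \<open>i < m\<close> this] show "dB i x \<in> fractions c"
    unfolding fractions_def by blast
qed

lemma fractions_eq_UNIV:
  assumes "diff_generated m dB \<nu> \<eta>" and "\<nu> c * \<eta> \<in> range \<nu>"
  shows "fractions c = UNIV"
proof -
  have "\<nu> c ^ 1 * \<eta> \<in> range \<nu>" using assms(2) by simp
  then have "\<eta> \<in> fractions c" unfolding fractions_def by blast
  then have "\<Inter>{S. diff_subring m dB S \<and> range \<nu> \<subseteq> S \<and> \<eta> \<in> S} \<subseteq> fractions c"
    using fractions_diff_subring range_subset_fractions by (intro Inter_lower) simp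
  then show ?thesis using assms(1) unfolding diff_generated_def by blast
qed

(* The extension of an ideal P of A to B, computed in the localisation at nu c. *)
definition ext_ideal :: "'a \<Rightarrow> 'a set \<Rightarrow> 'b set" where
  "ext_ideal c P = {y. \<exists>N. \<exists>a\<in>P. \<nu> c ^ N * y = \<nu> a}"

context
  fixes c :: 'a and P :: "'a set"
  assumes P: "P \<in> diff_V m dA (\<nu> -` {0})" and c_notin: "c \<notin> P" and all_fractions: "fractions c = UNIV"
begin

private lemma P_prime: "is_prime_ideal P"
  using P by (simp add: diff_V_def diff_spec_def)

private lemma P_ideal: "is_ideal P"
  using P_prime by (simp add: is_prime_ideal_def)

private lemma fraction_exists: "\<exists>N a. \<nu> c ^ N * y = \<nu> a"
  using all_fractions unfolding fractions_def by blast

(* Membership in the extension is decided by any numerator: numerators of the same element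
   differ by an element of ker nu after clearing powers of c, which cancel in P. *)
lemma ext_ideal_iff_numerator:
  assumes y: "\<nu> c ^ K * y = \<nu> e"
  shows "y \<in> ext_ideal c P \<longleftrightarrow> e \<in> P"
proof
  assume "y \<in> ext_ideal c P"
  then obtain N a where a: "a \<in> P" "\<nu> c ^ N * y = \<nu> a" unfolding ext_ideal_def by blast
  have "\<nu> (c ^ N * e) = \<nu> c ^ N * (\<nu> c ^ K * y)" using y by simp
  also have "\<dots> = \<nu> c ^ K * (\<nu> c ^ N * y)" by (rule mult.left_commute)
  also have "\<dots> = \<nu> (c ^ K * a)" using a(2) by simp
  finally have "c ^ N * e - c ^ K * a \<in> P" using P by (auto simp: diff_V_def)
  then have "c ^ N * e - c ^ K * a + c ^ K * a \<in> P"
    using ideal_add[OF P_ideal] ideal_mult_left[OF P_ideal a(1)] by blast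
  then show "e \<in> P" using prime_pow_cancel[OF P_prime c_notin] by simp
next
  assume "e \<in> P"
  then show "y \<in> ext_ideal c P" using y unfolding ext_ideal_def by blast
qed

lemma ext_ideal_is_ideal: "is_ideal (ext_ideal c P)"
  unfolding is_ideal_def
proof (intro conjI ballI allI)
  show "0 \<in> ext_ideal c P"
    using ext_ideal_iff_numerator[of 0 0 0] ideal_zero[OF P_ideal] by simp
next
  fix x y assume "x \<in> ext_ideal c P" "y \<in> ext_ideal c P"
  then obtain N a M e where x: "a \<in> P" "\<nu> c ^ N * x = \<nu> a" and y: "e \<in> P" "\<nu> c ^ M * y = \<nu> e"
    unfolding ext_ideal_def by blast
  have "c ^ M * a + c ^ N * e \<in> P"
    using P_ideal x(1) y(1) by (simp add: ideal_add ideal_mult_left)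
  then show "x + y \<in> ext_ideal c P"
    using fraction_add[OF x(2) y(2)] unfolding ext_ideal_def by blast
next
  fix x r assume "x \<in> ext_ideal c P"
  then obtain N a where x: "a \<in> P" "\<nu> c ^ N * x = \<nu> a" unfolding ext_ideal_def by blast
  obtain M g where r: "\<nu> c ^ M * r = \<nu> g" using fraction_exists by blast
  have "g * a \<in> P" using ideal_mult_left[OF P_ideal x(1)] .
  then show "r * x \<in> ext_ideal c P"
    using fraction_mult[OF r x(2)] unfolding ext_ideal_def by blast
qed

lemma contraction_ext_ideal: "\<nu> -` ext_ideal c P = P"
  using ext_ideal_iff_numerator[of 0] by auto

lemma ext_ideal_is_prime: "is_prime_ideal (ext_ideal c P)"
  unfolding is_prime_ideal_def
proof (intro conjI allI impI)
  show "is_ideal (ext_ideal c P)" by (rule ext_ideal_is_ideal)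
  show "1 \<notin> ext_ideal c P"
    using contraction_ext_ideal P_prime by (auto simp: is_prime_ideal_def)
next
  fix x y assume xy: "x * y \<in> ext_ideal c P"
  obtain N g where x: "\<nu> c ^ N * x = \<nu> g" using fraction_exists by blast
  obtain M h where y: "\<nu> c ^ M * y = \<nu> h" using fraction_exists by blast
  have "g * h \<in> P" using xy ext_ideal_iff_numerator[OF fraction_mult[OF x y]] by simp
  then have "g \<in> P \<or> h \<in> P" using P_prime by (simp add: is_prime_ideal_def)
  then show "x \<in> ext_ideal c P \<or> y \<in> ext_ideal c P"
    using ext_ideal_iff_numerator[OF x] ext_ideal_iff_numerator[OF y] by blast
qed

lemma ext_ideal_is_diff_ideal: "diff_ideal m dB (ext_ideal c P)"
  unfolding diff_ideal_def
proof (intro conjI allI impI ballI)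
  show "is_ideal (ext_ideal c P)" by (rule ext_ideal_is_ideal)
next
  fix i y assume i: "i < m" and "y \<in> ext_ideal c P"
  then obtain N a where y: "a \<in> P" "\<nu> c ^ N * y = \<nu> a" unfolding ext_ideal_def by blast
  have "dA i a \<in> P" using P i y(1) by (simp add: diff_V_def diff_spec_def diff_ideal_def)
  then have "c * dA i a - of_nat N * dA i c * a \<in> P"
    using P_ideal y(1) by (simp add: ideal_diff ideal_mult_left)
  then show "dB i y \<in> ext_ideal c P"
    using quotient_rule[OF i y(2)] unfolding ext_ideal_def by blast
qed

lemma ext_ideal_in_diff_spec: "ext_ideal c P \<in> diff_spec m dB"
  using ext_ideal_is_prime ext_ideal_is_diff_ideal by (simp add: diff_spec_def)

end

lemma ext_ideal_of_contraction:
  assumes q: "q \<in> diff_spec m dB" and c: "\<nu> c \<notin> q" and all_fractions: "fractions c = UNIV"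
  shows "ext_ideal c (\<nu> -` q) = q"
proof
  have prime: "is_prime_ideal q" using q by (simp add: diff_spec_def)
  show "ext_ideal c (\<nu> -` q) \<subseteq> q"
  proof
    fix y assume "y \<in> ext_ideal c (\<nu> -` q)"
    then obtain N a where "\<nu> a \<in> q" "\<nu> c ^ N * y = \<nu> a" unfolding ext_ideal_def by blast
    then have "\<nu> c ^ N * y \<in> q" by simp
    then show "y \<in> q" by (rule prime_pow_cancel[OF prime c])
  qed
  show "q \<subseteq> ext_ideal c (\<nu> -` q)"
  proof
    fix y assume "y \<in> q"
    obtain N a where a: "\<nu> c ^ N * y = \<nu> a" using all_fractions unfolding fractions_def by blast
    then have "\<nu> a \<in> q"
      using ideal_mult_left \<open>y \<in> q\<close> prime by (metis is_prime_ideal_def)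
    then show "y \<in> ext_ideal c (\<nu> -` q)" using a unfolding ext_ideal_def by blast
  qed
qed

lemma contraction_preimage_closed:
  "{q \<in> diff_spec m dB. \<nu> -` q \<in> diff_V m dA E \<inter> diff_V m dA (\<nu> -` {0})} = diff_V m dB (\<nu> ` E)"
proof (intro set_eqI iffI)
  fix q assume "q \<in> {q \<in> diff_spec m dB. \<nu> -` q \<in> diff_V m dA E \<inter> diff_V m dA (\<nu> -` {0})}"
  then show "q \<in> diff_V m dB (\<nu> ` E)" by (auto simp: diff_V_def)
next
  fix q assume q: "q \<in> diff_V m dB (\<nu> ` E)"
  then have "q \<in> diff_spec m dB" "E \<subseteq> \<nu> -` q" by (auto simp: diff_V_def)
  with contraction_in_diff_V[of q]
  show "q \<in> {q \<in> diff_spec m dB. \<nu> -` q \<in> diff_V m dA E \<inter> diff_V m dA (\<nu> -` {0})}"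
    by (simp add: diff_V_def)
qed

context
  assumes cover: "\<forall>P\<in>diff_spec m dA. \<exists>c. c \<notin> P \<and> fractions c = UNIV"
begin

lemma contraction_surj: "(\<lambda>q. \<nu> -` q) ` diff_spec m dB = diff_V m dA (\<nu> -` {0})"
proof
  show "(\<lambda>q. \<nu> -` q) ` diff_spec m dB \<subseteq> diff_V m dA (\<nu> -` {0})"
    using contraction_in_diff_V by blast
  show "diff_V m dA (\<nu> -` {0}) \<subseteq> (\<lambda>q. \<nu> -` q) ` diff_spec m dB"
  proof
    fix P assume P: "P \<in> diff_V m dA (\<nu> -` {0})"
    then have "P \<in> diff_spec m dA" using diff_V_subset_spec by blast
    then obtain c where c: "c \<notin> P" "fractions c = UNIV" using cover by blast
    show "P \<in> (\<lambda>q. \<nu> -` q) ` diff_spec m dB"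
      using ext_ideal_in_diff_spec[OF P c] contraction_ext_ideal[OF P c] by (rule rev_image_eqI[OF _ sym])
  qed
qed

lemma contraction_inj: "inj_on (\<lambda>q. \<nu> -` q) (diff_spec m dB)"
proof (rule inj_onI)
  fix q1 q2 assume q1: "q1 \<in> diff_spec m dB" and q2: "q2 \<in> diff_spec m dB"
    and eq: "\<nu> -` q1 = \<nu> -` q2"
  have "\<nu> -` q1 \<in> diff_spec m dA"
    using contraction_in_diff_V[OF q1] diff_V_subset_spec by blast
  then obtain c where c: "c \<notin> \<nu> -` q1" "fractions c = UNIV" using cover by blast
  have "q1 = ext_ideal c (\<nu> -` q1)" using ext_ideal_of_contraction[OF q1 _ c(2)] c(1) by simp
  also have "\<dots> = q2" using ext_ideal_of_contraction[OF q2 _ c(2)] c(1) eq by simp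
  finally show "q1 = q2" .
qed

lemma contraction_image_closed:
  "(\<lambda>q. \<nu> -` q) ` diff_V m dB E
     = diff_V m dA (\<nu> -` {r * y |r y. y \<in> E}) \<inter> diff_V m dA (\<nu> -` {0})"
  (is "_ = diff_V m dA ?E' \<inter> _")
proof
  show "(\<lambda>q. \<nu> -` q) ` diff_V m dB E \<subseteq> diff_V m dA ?E' \<inter> diff_V m dA (\<nu> -` {0})"
  proof
    fix P assume "P \<in> (\<lambda>q. \<nu> -` q) ` diff_V m dB E"
    then obtain q where q: "q \<in> diff_spec m dB" "E \<subseteq> q" and P: "P = \<nu> -` q"
      by (auto simp: diff_V_def)
    have "is_ideal q" using q(1) by (simp add: diff_spec_def is_prime_ideal_def)
    then have "?E' \<subseteq> P" using q(2) ideal_mult_left unfolding P by blast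
    then show "P \<in> diff_V m dA ?E' \<inter> diff_V m dA (\<nu> -` {0})"
      using contraction_in_diff_V[OF q(1)] unfolding P by (simp add: diff_V_def)
  qed
  show "diff_V m dA ?E' \<inter> diff_V m dA (\<nu> -` {0}) \<subseteq> (\<lambda>q. \<nu> -` q) ` diff_V m dB E"
  proof
    fix P assume "P \<in> diff_V m dA ?E' \<inter> diff_V m dA (\<nu> -` {0})"
    then have P: "P \<in> diff_V m dA (\<nu> -` {0})" and E': "?E' \<subseteq> P" by (auto simp: diff_V_def)
    then have "P \<in> diff_spec m dA" using diff_V_subset_spec by blast
    then obtain c where c: "c \<notin> P" "fractions c = UNIV" using cover by blast
    have "E \<subseteq> ext_ideal c P"
    proof
      fix y assume "y \<in> E"
      obtain N a where a: "\<nu> c ^ N * y = \<nu> a" using c(2) unfolding fractions_def by blast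
      then have "a \<in> ?E'" using \<open>y \<in> E\<close> by (auto intro: sym)
      then have "a \<in> P" using E' by blast
      then show "y \<in> ext_ideal c P" using a unfolding ext_ideal_def by blast
    qed
    then have "ext_ideal c P \<in> diff_V m dB E"
      using ext_ideal_in_diff_spec[OF P c] by (simp add: diff_V_def)
    then show "P \<in> (\<lambda>q. \<nu> -` q) ` diff_V m dB E"
      using contraction_ext_ideal[OF P c] by (rule rev_image_eqI[OF _ sym])
  qed
qed

lemma contraction_homeomorphism:
  "homeomorphic_map (kolchin_topology m dB)
     (subtopology (kolchin_topology m dA) (diff_V m dA (\<nu> -` {0}))) (\<lambda>q. \<nu> -` q)"
proof (rule bijective_closed_imp_homeomorphic_map)
  have top: "topspace (subtopology (kolchin_topology m dA) (diff_V m dA (\<nu> -` {0})))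
      = diff_V m dA (\<nu> -` {0})"
    unfolding topspace_subtopology topspace_kolchin using diff_V_subset_spec by blast
  show "continuous_map (kolchin_topology m dB)
      (subtopology (kolchin_topology m dA) (diff_V m dA (\<nu> -` {0}))) (\<lambda>q. \<nu> -` q)"
    unfolding continuous_map_closedin top topspace_kolchin
  proof (intro conjI allI impI)
    show "(\<lambda>q. \<nu> -` q) \<in> diff_spec m dB \<rightarrow> diff_V m dA (\<nu> -` {0})"
      using contraction_in_diff_V by blast
    fix C assume "closedin (subtopology (kolchin_topology m dA) (diff_V m dA (\<nu> -` {0}))) C"
    then obtain E where "C = diff_V m dA E \<inter> diff_V m dA (\<nu> -` {0})"
      unfolding closedin_subtopology closedin_kolchin by blast
    then have "{q \<in> diff_spec m dB. \<nu> -` q \<in> C} = diff_V m dB (\<nu> ` E)"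
      by (simp only: contraction_preimage_closed)
    then show "closedin (kolchin_topology m dB) {q \<in> diff_spec m dB. \<nu> -` q \<in> C}"
      unfolding closedin_kolchin by blast
  qed
  show "closed_map (kolchin_topology m dB)
      (subtopology (kolchin_topology m dA) (diff_V m dA (\<nu> -` {0}))) (\<lambda>q. \<nu> -` q)"
    unfolding closed_map_def
  proof (intro allI impI)
    fix S assume "closedin (kolchin_topology m dB) S"
    then obtain E where "S = diff_V m dB E" unfolding closedin_kolchin by blast
    then have "(\<lambda>q. \<nu> -` q) ` S
        = diff_V m dA (\<nu> -` {r * y |r y. y \<in> E}) \<inter> diff_V m dA (\<nu> -` {0})"
      by (simp only: contraction_image_closed)
    then show "closedin (subtopology (kolchin_topology m dA) (diff_V m dA (\<nu> -` {0})))
        ((\<lambda>q. \<nu> -` q) ` S)"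
      unfolding closedin_subtopology closedin_kolchin by blast
  qed
  show "(\<lambda>q. \<nu> -` q) ` topspace (kolchin_topology m dB)
      = topspace (subtopology (kolchin_topology m dA) (diff_V m dA (\<nu> -` {0})))"
    unfolding top topspace_kolchin by (rule contraction_surj)
  show "inj_on (\<lambda>q. \<nu> -` q) (topspace (kolchin_topology m dB))"
    unfolding topspace_kolchin by (rule contraction_inj)
qed

end

end

theorem lemma2p2:
  fixes m :: nat
    and dA :: "nat \<Rightarrow> 'a::comm_ring_1 \<Rightarrow> 'a"
    and dB :: "nat \<Rightarrow> 'b::comm_ring_1 \<Rightarrow> 'b"
    and \<nu> :: "'a \<Rightarrow> 'b" and \<eta> :: 'b
    and n :: nat and b :: "nat \<Rightarrow> 'a"
  assumes "diff_ring m dA" and "diff_ring m dB"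
    and "diff_hom m dA dB \<nu>"
    and "diff_generated m dB \<nu> \<eta>"
    and "\<forall>k<n. \<nu> (b k) * \<eta> \<in> range \<nu>"
    and "rad_diff_ideal_gen m dA (b ` {..<n}) = UNIV"
  shows "homeomorphic_map (kolchin_topology m dB)
           (subtopology (kolchin_topology m dA) (diff_V m dA (\<nu> -` {0})))
           (\<lambda>q. \<nu> -` q)"
proof -
  interpret diff_ring_hom m dA dB \<nu>
    using assms(2,3) by unfold_locales
  have "\<exists>c. c \<notin> P \<and> fractions c = UNIV" if P: "P \<in> diff_spec m dA" for P
  proof -
    obtain k where "k < n" "b k \<notin> P"
      using diff_spec_avoids_generators[OF assms(6) P] by blast
    moreover have "fractions (b k) = UNIV"
      using fractions_eq_UNIV[OF assms(4)] assms(5) \<open>k < n\<close> by blast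
    ultimately show ?thesis by blast
  qed
  then show ?thesis by (intro contraction_homeomorphism ballI)
qed

end
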